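(* Let $\lambda>0$, $p\in(1,\infty)$, and let $X$ be a Banach space having a closed linear subspace $Y$ of finite codimension such that $Y$ has property $\lambda$-HFC$_{p,d}$ (resp. $\lambda$-HIC$_{p,d}$). Then for every $\varepsilon>0$, $X$ has property $(\lambda+\varepsilon)$-HFC$_{p,d}$ (resp. $(\lambda+\varepsilon)$-HIC$_{p,d}$).
   Context: For $\mathbb{M}\subset\mathbb{N}$ infinite and $k\in\mathbb{N}$, $[\mathbb{M}]^k=\{\overline{n}=(n_1,\dots,n_k)\in\mathbb{M}^k: n_1<\cdots<n_k\}$; $[\mathbb{N}]^\omega$ denotes the set of infinite subsets of $\mathbb{N}$. Set $I_k(\mathbb{M})=\{(\overline{n},\overline{m})\in[\mathbb{M}]^k\times[\mathbb{M}]^k: n_1<m_1<n_2<m_2<\cdots<n_k<m_k\}$ and, for $1\le j\le k$, $H_j(\mathbb{M})=\{(\overline{n},\overline{m})\in[\mathbb{M}]^k\times[\mathbb{M}]^k: n_i=m_i \text{ for all } i\neq j,\ n_j<m_j\}$. For a map $f:[\mathbb{N}]^k\to (X,d)$, $\operatorname{Lip}_j(f)=\sup_{(\overline{n},\overline{m})\in H_j(\mathbb{N})} d(f(\overline{n}),f(\overline{m}))$. A metric space $(X,d)$ has property $\lambda$-HFC$_{p,d}$ (resp. $\lambda$-HIC$_{p,d}$), for $\lambda>0$, $p\in(1,\infty)$, if for every $k\in\mathbb{N}$ and every bounded function $f:[\mathbb{N}]^k\to X$ there exists $\mathbb{M}\in[\mathbb{N}]^\omega$ such that $d(f(\overline{n}),f(\overline{m}))\le\lambda\left(\sum_{j=1}^k\operatorname{Lip}_j(f)^p\right)^{1/p}$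 for all $\overline{n},\overline{m}\in[\mathbb{M}]^k$ (resp. for all $(\overline{n},\overline{m})\in I_k(\mathbb{M})$). *)

theory Defs
  imports "HOL-Analysis.Analysis"
begin

definition incr_tuples :: "nat set \<Rightarrow> nat \<Rightarrow> nat list set" where
  "incr_tuples M k = {n. length n = k \<and> set n \<subseteq> M \<and> sorted_wrt (<) n}"

definition interlaced :: "nat set \<Rightarrow> nat \<Rightarrow> (nat list \<times> nat list) set" where
  "interlaced M k = {(n, m). n \<in> incr_tuples M k \<and> m \<in> incr_tuples M k \<and>
      (\<forall>i<k. n ! i < m ! i) \<and> (\<forall>i. Suc i < k \<longrightarrow> m ! i < n ! Suc i)}"

text \<open>H_j(M) (0-indexed j < k): pairs differing only at coordinate j, with n_j < m_j.\<close>
definition Hpairs :: "nat set \<Rightarrow> nat \<Rightarrow> nat \<Rightarrow> (nat list \<times> nat list) set" where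
  "Hpairs M k j = {(n, m). n \<in> incr_tuples M k \<and> m \<in> incr_tuples M k \<and>
      (\<forall>i<k. i \<noteq> j \<longrightarrow> n ! i = m ! i) \<and> n ! j < m ! j}"

definition Lipj :: "(nat list \<Rightarrow> 'a::metric_space) \<Rightarrow> nat \<Rightarrow> nat \<Rightarrow> real" where
  "Lipj f k j = (SUP nm \<in> Hpairs UNIV k j. dist (f (fst nm)) (f (snd nm)))"

definition HFC :: "real \<Rightarrow> real \<Rightarrow> 'a::metric_space set \<Rightarrow> bool" where
  "HFC lam p S \<longleftrightarrow> (\<forall>k. \<forall>f :: nat list \<Rightarrow> 'a.
     (f ` incr_tuples UNIV k \<subseteq> S \<and> bounded (f ` incr_tuples UNIV k)) \<longrightarrow>
     (\<exists>M. infinite M \<and> (\<forall>n \<in> incr_tuples M k. \<forall>m \<in> incr_tuples M k.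
        dist (f n) (f m) \<le> lam * (\<Sum>j<k. Lipj f k j powr p) powr (1 / p))))"

definition HIC :: "real \<Rightarrow> real \<Rightarrow> 'a::metric_space set \<Rightarrow> bool" where
  "HIC lam p S \<longleftrightarrow> (\<forall>k. \<forall>f :: nat list \<Rightarrow> 'a.
     (f ` incr_tuples UNIV k \<subseteq> S \<and> bounded (f ` incr_tuples UNIV k)) \<longrightarrow>
     (\<exists>M. infinite M \<and> (\<forall>(n, m) \<in> interlaced M k.
        dist (f n) (f m) \<le> lam * (\<Sum>j<k. Lipj f k j powr p) powr (1 / p))))"

end

theory Submission
  imports Defs "HOL-Library.Ramsey"
begin

(*
  Since Y is closed and of finite codimension, there is a finite F such that every x splits as
  x = y + sum_{u in F} c_u u with y in Y and |c_u| <= C |x|. For a bounded f on k-tuples the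
  coordinates of f thus lie in a bounded box; cutting the box into cells of width w and applying
  Ramsey's theorem gives a subsequence along which each coordinate of f varies by less than w.
  Subtracting the coordinate part yields a Y-valued G whose distances, hence Lipschitz constants
  Lip_j, differ from those of f by at most eta. The property of Y applied to G, with eta small,
  gives the property of X with constant lambda + epsilon, unless the l_p norm of the Lip_j
  vanishes, in which case f is constant.
*)

definition lip_pnorm :: "(nat list \<Rightarrow> 'a::metric_space) \<Rightarrow> nat \<Rightarrow> real \<Rightarrow> real" where
  "lip_pnorm f k p = (\<Sum>j<k. Lipj f k j powr p) powr (1 / p)"

(* HFC and HIC only differ in the set P M k of pairs of k-tuples from M on which the estimate is
   required; the argument below is uniform in P. *)
definition tuple_concentration ::
    "(nat set \<Rightarrow> nat \<Rightarrow> (nat list \<times> nat list) set) \<Rightarrow> real \<Rightarrow> real \<Rightarrow> 'a::metric_space set \<Rightarrow> bool" where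
  "tuple_concentration P lam p S \<longleftrightarrow> (\<forall>k. \<forall>f :: nat list \<Rightarrow> 'a.
     f ` incr_tuples UNIV k \<subseteq> S \<and> bounded (f ` incr_tuples UNIV k) \<longrightarrow>
     (\<exists>M. infinite M \<and> (\<forall>(n, m) \<in> P M k. dist (f n) (f m) \<le> lam * lip_pnorm f k p)))"

lemma HFC_iff_tuple_concentration:
  "HFC lam p S \<longleftrightarrow> tuple_concentration (\<lambda>M k. incr_tuples M k \<times> incr_tuples M k) lam p S"
  unfolding HFC_def tuple_concentration_def lip_pnorm_def by fast

lemma HIC_iff_tuple_concentration: "HIC lam p S \<longleftrightarrow> tuple_concentration interlaced lam p S"
  unfolding HIC_def tuple_concentration_def lip_pnorm_def ..

lemma incr_tuples_mono: "A \<subseteq> B \<Longrightarrow> incr_tuples A k \<subseteq> incr_tuples B k"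
  unfolding incr_tuples_def by auto

lemma incr_tuples_image:
  assumes "strict_mono e"
  shows "incr_tuples (e ` A) k = map e ` incr_tuples A k"
proof
  show "map e ` incr_tuples A k \<subseteq> incr_tuples (e ` A) k"
    using assms unfolding incr_tuples_def
    by (auto simp: sorted_wrt_map strict_mono_less elim!: sorted_wrt_mono_rel[rotated]) blast
  show "incr_tuples (e ` A) k \<subseteq> map e ` incr_tuples A k"
  proof
    fix n assume n: "n \<in> incr_tuples (e ` A) k"
    then have "\<forall>y\<in>set n. \<exists>x. y = e x" unfolding incr_tuples_def by auto
    then obtain n' where n': "n = map e n'"
      using ex_map_conv by metis
    then have "n' \<in> incr_tuples A k"
      using n assms unfolding incr_tuples_def
      by (auto simp: sorted_wrt_map strict_mono_less inj_image_subset_iff[OF strict_mono_imp_inj_on])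
    with n' show "n \<in> map e ` incr_tuples A k" by blast
  qed
qed

lemma interlaced_image:
  assumes "strict_mono e"
  shows "interlaced (e ` A) k \<subseteq> map_prod (map e) (map e) ` interlaced A k"
proof clarify
  fix n m assume nm: "(n, m) \<in> interlaced (e ` A) k"
  then have "n \<in> map e ` incr_tuples A k" "m \<in> map e ` incr_tuples A k"
    unfolding interlaced_def incr_tuples_image[OF assms, symmetric] by auto
  then obtain n' m' where eq: "n = map e n'" "m = map e m'"
    and tuples: "n' \<in> incr_tuples A k" "m' \<in> incr_tuples A k"
    by blast
  then have "length n' = k" "length m' = k" unfolding incr_tuples_def by auto
  with nm tuples have "(n', m') \<in> interlaced A k"
    unfolding interlaced_def eq by (simp add: strict_mono_less[OF assms])
  with eq show "(n, m) \<in> map_prod (map e) (map e) ` interlaced A k" by force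
qed

lemma map_in_incr_tuples_UNIV:
  assumes "strict_mono e" "n \<in> incr_tuples UNIV k"
  shows "map e n \<in> incr_tuples UNIV k"
  using assms incr_tuples_image[OF assms(1), of UNIV k] incr_tuples_mono[of "range e" UNIV k]
  by blast

lemma Hpairs_map:
  assumes "strict_mono e" "(n, m) \<in> Hpairs UNIV k j" "j < k"
  shows "(map e n, map e m) \<in> Hpairs UNIV k j"
proof -
  from assms(2) have "n \<in> incr_tuples UNIV k" "m \<in> incr_tuples UNIV k"
    unfolding Hpairs_def by auto
  moreover from this have "length n = k" "length m = k" unfolding incr_tuples_def by auto
  ultimately show ?thesis
    using assms unfolding Hpairs_def by (simp add: map_in_incr_tuples_UNIV strict_mono_less)
qed

lemma sorted_list_of_set_in_incr_tuples:
  assumes "X \<subseteq> A" "finite X" "card X = k"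
  shows "sorted_list_of_set X \<in> incr_tuples A k"
  using assms unfolding incr_tuples_def by simp

lemma incr_tuple_eq_sorted_list_of_set:
  assumes "a \<in> incr_tuples A k"
  shows "sorted_list_of_set (set a) = a" "set a \<subseteq> A" "card (set a) = k"
  using assms unfolding incr_tuples_def
  by (auto simp: strict_sorted_equal distinct_card strict_sorted_iff)

lemma Ramsey_incr_tuples:
  fixes c :: "nat list \<Rightarrow> 'b"
  assumes "infinite Z" "finite (c ` incr_tuples Z k)"
  obtains M where "M \<subseteq> Z" "infinite M"
    "\<And>a b. a \<in> incr_tuples M k \<Longrightarrow> b \<in> incr_tuples M k \<Longrightarrow> c a = c b"
proof -
  let ?C = "c ` incr_tuples Z k"
  obtain h :: "'b \<Rightarrow> nat" where h: "bij_betw h ?C {0..<card ?C}"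
    using ex_bij_betw_finite_nat[OF assms(2)] by blast
  define col where "col X = h (c (sorted_list_of_set X))" for X
  have "\<forall>X. X \<subseteq> Z \<and> finite X \<and> card X = k \<longrightarrow> col X < card ?C"
  proof (intro allI impI, elim conjE)
    fix X assume "X \<subseteq> Z" "finite X" "card X = k"
    then have "c (sorted_list_of_set X) \<in> ?C" using sorted_list_of_set_in_incr_tuples by blast
    then show "col X < card ?C" using bij_betwE[OF h] unfolding col_def by auto
  qed
  from Ramsey[OF assms(1) this] obtain M t where M: "M \<subseteq> Z" "infinite M"
    and mono: "\<And>X. X \<subseteq> M \<Longrightarrow> finite X \<Longrightarrow> card X = k \<Longrightarrow> col X = t"
    by auto
  have h_const: "h (c a) = t" and c_range: "c a \<in> ?C" if "a \<in> incr_tuples M k" for a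
  proof -
    note a = incr_tuple_eq_sorted_list_of_set[OF that]
    show "h (c a) = t" using mono[of "set a"] a by (simp add: col_def)
    show "c a \<in> ?C" using incr_tuples_mono[OF M(1)] that by blast
  qed
  have "c a = c b" if "a \<in> incr_tuples M k" "b \<in> incr_tuples M k" for a b
    using inj_onD[OF bij_betw_imp_inj_on[OF h]] h_const c_range that by metis
  with M that show ?thesis by blast
qed

lemma subsequence_coordinates_close:
  fixes g :: "nat list \<Rightarrow> 'b \<Rightarrow> real"
  assumes "finite F" "w > 0"
    and bound: "\<And>a u. a \<in> incr_tuples UNIV k \<Longrightarrow> u \<in> F \<Longrightarrow> \<bar>g a u\<bar> \<le> R"
  obtains e where "strict_mono e"
    "\<And>a b u. a \<in> incr_tuples UNIV k \<Longrightarrow> b \<in> incr_tuples UNIV k \<Longrightarrow> u \<in> F \<Longrightarrow>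
      \<bar>g (map e a) u - g (map e b) u\<bar> < w"
proof -
  \<comment> \<open>Colour each tuple by the cells of width w containing its coordinates: finitely many colours.\<close>
  define c where "c a = restrict (\<lambda>u. \<lfloor>g a u / w\<rfloor>) F" for a
  have "c ` incr_tuples UNIV k \<subseteq> (\<Pi>\<^sub>E u\<in>F. {\<lfloor>- R / w\<rfloor>..\<lfloor>R / w\<rfloor>})"
  proof clarify
    fix a assume a: "a \<in> incr_tuples UNIV k"
    have "\<lfloor>g a u / w\<rfloor> \<in> {\<lfloor>- R / w\<rfloor>..\<lfloor>R / w\<rfloor>}" if "u \<in> F" for u
    proof -
      have "- R \<le> g a u" "g a u \<le> R" using bound[OF a that] by auto
      then have "- R / w \<le> g a u / w" "g a u / w \<le> R / w"
        using \<open>w > 0\<close> by (simp_all only: divide_right_mono less_imp_le)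
      then have "\<lfloor>- R / w\<rfloor> \<le> \<lfloor>g a u / w\<rfloor>" "\<lfloor>g a u / w\<rfloor> \<le> \<lfloor>R / w\<rfloor>"
        by (blast intro: floor_mono)+
      then show ?thesis by simp
    qed
    then show "c a \<in> (\<Pi>\<^sub>E u\<in>F. {\<lfloor>- R / w\<rfloor>..\<lfloor>R / w\<rfloor>})" unfolding c_def by auto
  qed
  then have fin: "finite (c ` incr_tuples UNIV k)"
    using \<open>finite F\<close> by (rule finite_subset[OF _ finite_PiE]) auto
  obtain M where M: "infinite M"
    and same: "\<And>a b. a \<in> incr_tuples M k \<Longrightarrow> b \<in> incr_tuples M k \<Longrightarrow> c a = c b"
    using Ramsey_incr_tuples[OF infinite_UNIV_nat fin] by metis
  define e where "e = enumerate M"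
  have "strict_mono e" "range e = M"
    unfolding e_def using M by (auto simp: strict_mono_enumerate range_enumerate)
  have "\<bar>g (map e a) u - g (map e b) u\<bar> < w"
    if "a \<in> incr_tuples UNIV k" "b \<in> incr_tuples UNIV k" "u \<in> F" for a b u
  proof -
    have "map e a \<in> incr_tuples M k" "map e b \<in> incr_tuples M k"
      using that(1,2) incr_tuples_image[OF \<open>strict_mono e\<close>, of UNIV k] \<open>range e = M\<close> by blast+
    from same[OF this] have "c (map e a) u = c (map e b) u" by simp
    then have "\<lfloor>g (map e a) u / w\<rfloor> = \<lfloor>g (map e b) u / w\<rfloor>" using \<open>u \<in> F\<close> by (simp add: c_def)
    then have "\<bar>g (map e a) u / w - g (map e b) u / w\<bar> < 1" by linarith
    then show ?thesis using \<open>w > 0\<close> by (simp add: abs_less_iff field_simps)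
  qed
  with \<open>strict_mono e\<close> that show ?thesis by blast
qed

definition move_tail :: "nat list \<Rightarrow> nat \<Rightarrow> nat \<Rightarrow> nat list" where
  "move_tail n N i = take i n @ [N + i..<N + length n]"

lemma move_tail_in_incr_tuples:
  assumes "n \<in> incr_tuples UNIV k" "\<forall>x\<in>set n. x < N"
  shows "move_tail n N i \<in> incr_tuples UNIV k"
proof -
  have "length n = k" "sorted_wrt (<) n" using assms(1) unfolding incr_tuples_def by auto
  moreover have "\<forall>x\<in>set (take i n). \<forall>y\<in>set [N + i..<N + k]. x < y"
    using assms(2) by (fastforce dest: in_set_takeD)
  ultimately show ?thesis
    unfolding incr_tuples_def move_tail_def by (auto simp: sorted_wrt_append sorted_wrt_take)
qed

lemma nth_move_tail:
  "j < length n \<Longrightarrow> move_tail n N i ! j = (if j < i then n ! j else N + j)"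
  unfolding move_tail_def by (auto simp: nth_append min_def)

lemma move_tail_Hpairs:
  assumes "n \<in> incr_tuples UNIV k" "\<forall>x\<in>set n. x < N" "i < k"
  shows "(move_tail n N (Suc i), move_tail n N i) \<in> Hpairs UNIV k i"
proof -
  have "length n = k" using assms(1) unfolding incr_tuples_def by auto
  then have "n ! i < N + i" using assms(2,3) by (simp add: trans_less_add1)
  with \<open>length n = k\<close> show ?thesis
    unfolding Hpairs_def using move_tail_in_incr_tuples[OF assms(1,2)] assms(3)
    by (auto simp: nth_move_tail)
qed

lemma Hpairs_nonempty: "j < k \<Longrightarrow> Hpairs UNIV k j \<noteq> {}"
  using move_tail_Hpairs[of "[0..<k]" k k j] unfolding incr_tuples_def by auto

lemma dist_le_Lipj:
  fixes f :: "nat list \<Rightarrow> 'a::metric_space"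
  assumes "bounded (f ` incr_tuples UNIV k)" "(a, b) \<in> Hpairs UNIV k j"
  shows "dist (f a) (f b) \<le> Lipj f k j"
proof -
  obtain B where "\<forall>x\<in>f ` incr_tuples UNIV k. \<forall>y\<in>f ` incr_tuples UNIV k. dist x y \<le> B"
    using assms(1) bounded_two_points by blast
  then have "bdd_above ((\<lambda>nm. dist (f (fst nm)) (f (snd nm))) ` Hpairs UNIV k j)"
    unfolding bdd_above_def Hpairs_def by fastforce
  from cSUP_upper[OF assms(2) this] show ?thesis unfolding Lipj_def by simp
qed

lemma Lipj_nonneg:
  fixes f :: "nat list \<Rightarrow> 'a::metric_space"
  assumes "bounded (f ` incr_tuples UNIV k)" "j < k"
  shows "0 \<le> Lipj f k j"
proof -
  obtain a b where "(a, b) \<in> Hpairs UNIV k j" using Hpairs_nonempty[OF assms(2)] by auto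
  from dist_le_Lipj[OF assms(1) this] show ?thesis by (meson order_trans zero_le_dist)
qed

lemma Lipj_le:
  fixes f :: "nat list \<Rightarrow> 'a::metric_space"
  assumes "j < k" "\<And>a b. (a, b) \<in> Hpairs UNIV k j \<Longrightarrow> dist (f a) (f b) \<le> c"
  shows "Lipj f k j \<le> c"
  unfolding Lipj_def using Hpairs_nonempty[OF assms(1)] assms(2) by (intro cSUP_least) auto

lemma dist_move_tail_le_sum_Lipj:
  fixes f :: "nat list \<Rightarrow> 'a::metric_space"
  assumes bnd: "bounded (f ` incr_tuples UNIV k)"
    and n: "n \<in> incr_tuples UNIV k" "\<forall>x\<in>set n. x < N" and "i \<le> k"
  shows "dist (f n) (f (move_tail n N i)) \<le> (\<Sum>j\<in>{i..<k}. Lipj f k j)"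
  using \<open>i \<le> k\<close>
proof (induction i rule: inc_induct)
  case base
  have "length n = k" using n(1) unfolding incr_tuples_def by auto
  then show ?case by (simp add: move_tail_def)
next
  case (step i)
  have "dist (f n) (f (move_tail n N i))
      \<le> dist (f n) (f (move_tail n N (Suc i))) + dist (f (move_tail n N (Suc i))) (f (move_tail n N i))"
    by (rule dist_triangle)
  also have "\<dots> \<le> (\<Sum>j\<in>{Suc i..<k}. Lipj f k j) + Lipj f k i"
    using step.IH dist_le_Lipj[OF bnd move_tail_Hpairs[OF n step.hyps(2)]] by linarith
  also have "\<dots> = (\<Sum>j\<in>{i..<k}. Lipj f k j)"
    using step.hyps(2) by (simp add: sum.atLeast_Suc_lessThan)
  finally show ?case .
qed

lemma dist_le_two_sum_Lipj:
  fixes f :: "nat list \<Rightarrow> 'a::metric_space"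
  assumes bnd: "bounded (f ` incr_tuples UNIV k)"
    and "n \<in> incr_tuples UNIV k" "m \<in> incr_tuples UNIV k"
  shows "dist (f n) (f m) \<le> 2 * (\<Sum>j<k. Lipj f k j)"
proof -
  define N where "N = Suc (Max (set n \<union> set m))"
  have "\<forall>x\<in>set n. x < N" "\<forall>x\<in>set m. x < N"
    unfolding N_def by (auto simp: le_imp_less_Suc)
  then have "dist (f n) (f [N..<N + k]) \<le> (\<Sum>j<k. Lipj f k j)"
    "dist (f m) (f [N..<N + k]) \<le> (\<Sum>j<k. Lipj f k j)"
    using assms dist_move_tail_le_sum_Lipj[of f k _ N 0]
    by (auto simp: move_tail_def atLeast0LessThan incr_tuples_def)
  then show ?thesis using dist_triangle2[of "f n" "f m" "f [N..<N + k]"] by linarith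
qed

lemma lip_pnorm_nonneg: "0 \<le> lip_pnorm f k p"
  unfolding lip_pnorm_def by simp

lemma lip_pnorm_eq_0_imp_eq:
  fixes f :: "nat list \<Rightarrow> 'a::metric_space"
  assumes bnd: "bounded (f ` incr_tuples UNIV k)" and "p > 0" "lip_pnorm f k p = 0"
    and "n \<in> incr_tuples UNIV k" "m \<in> incr_tuples UNIV k"
  shows "f n = f m"
proof -
  have "(\<Sum>j<k. Lipj f k j powr p) = 0"
    using \<open>lip_pnorm f k p = 0\<close> unfolding lip_pnorm_def by simp
  then have "Lipj f k j = 0" if "j < k" for j
    using that by (simp add: sum_nonneg_eq_0_iff)
  then have "dist (f n) (f m) \<le> 0"
    using dist_le_two_sum_Lipj[OF bnd assms(4,5)] by simp
  then show ?thesis by simp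
qed

lemma lp_norm_mono:
  fixes a b :: "nat \<Rightarrow> real"
  assumes "p > 0" "\<And>j. j < k \<Longrightarrow> 0 \<le> a j" "\<And>j. j < k \<Longrightarrow> a j \<le> b j"
  shows "(\<Sum>j<k. a j powr p) powr (1 / p) \<le> (\<Sum>j<k. b j powr p) powr (1 / p)"
  using assms by (intro powr_mono2 sum_mono) (auto intro: sum_nonneg)

lemma lp_norm_perturbation_margin:
  fixes a :: "nat \<Rightarrow> real"
  assumes p: "p > 0" and "\<epsilon> > 0" and a: "\<And>j. j < k \<Longrightarrow> 0 \<le> a j"
    and L: "(\<Sum>j<k. a j powr p) powr (1 / p) > 0"
  obtains \<eta> where "\<eta> > 0"
    "lam * (\<Sum>j<k. (a j + \<eta>) powr p) powr (1 / p) + \<eta> \<le> (lam + \<epsilon>) * (\<Sum>j<k. a j powr p) powr (1 / p)"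
proof -
  define \<phi> where "\<phi> t = lam * (\<Sum>j<k. (a j + t) powr p) powr (1 / p) + t" for t
  have "((\<lambda>t. (a j + t) powr p) \<longlongrightarrow> (a j + 0) powr p) (at_right 0)" if "j < k" for j
  proof -
    have "\<forall>\<^sub>F t in at_right 0. 0 \<le> a j + t"
      using eventually_at_right_less[of "0::real"] by eventually_elim (use a that in auto)
    moreover have "((\<lambda>t. a j + t) \<longlongrightarrow> a j + 0) (at_right 0)"
      by (intro tendsto_add tendsto_const tendsto_ident_at)
    ultimately show ?thesis using p tendsto_powr'[OF _ tendsto_const] by blast
  qed
  then have "((\<lambda>t. \<Sum>j<k. (a j + t) powr p) \<longlongrightarrow> (\<Sum>j<k. (a j + 0) powr p)) (at_right 0)"
    by (intro tendsto_sum) auto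
  moreover have "(\<Sum>j<k. (a j + 0) powr p) \<noteq> 0" using L by auto
  ultimately have "(\<phi> \<longlongrightarrow> \<phi> 0) (at_right 0)"
    unfolding \<phi>_def by (intro tendsto_add tendsto_mult tendsto_const tendsto_powr tendsto_ident_at)
  moreover have "\<phi> 0 < (lam + \<epsilon>) * (\<Sum>j<k. a j powr p) powr (1 / p)"
    using L \<open>\<epsilon> > 0\<close> a unfolding \<phi>_def by (simp add: algebra_simps)
  ultimately have "\<forall>\<^sub>F t in at_right 0. \<phi> t < (lam + \<epsilon>) * (\<Sum>j<k. a j powr p) powr (1 / p)"
    by (rule order_tendstoD)
  then have "\<forall>\<^sub>F t in at_right 0. 0 < t \<and> \<phi> t < (lam + \<epsilon>) * (\<Sum>j<k. a j powr p) powr (1 / p)"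
    using eventually_at_right_less by (rule eventually_conj[rotated])
  then obtain \<eta> where "\<eta> > 0" "\<phi> \<eta> < (lam + \<epsilon>) * (\<Sum>j<k. a j powr p) powr (1 / p)"
    using eventually_happens'[OF trivial_limit_at_right_real] by blast
  with that show ?thesis unfolding \<phi>_def by simp
qed

lemma norm_sum_scaleR_le:
  fixes F :: "'a::real_normed_vector set"
  assumes "\<And>u. u \<in> F \<Longrightarrow> \<bar>c u\<bar> \<le> r"
  shows "norm (\<Sum>u\<in>F. c u *\<^sub>R u) \<le> r * (\<Sum>u\<in>F. norm u)"
proof -
  have "norm (\<Sum>u\<in>F. c u *\<^sub>R u) \<le> (\<Sum>u\<in>F. \<bar>c u\<bar> * norm u)"
    using norm_sum[of "\<lambda>u. c u *\<^sub>R u" F] by simp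
  also have "\<dots> \<le> (\<Sum>u\<in>F. r * norm u)"
    using assms by (intro sum_mono mult_right_mono) auto
  finally show ?thesis by (simp add: sum_distrib_left)
qed

lemma abs_mult_infdist_le_norm:
  fixes Y :: "'a::real_normed_vector set"
  assumes "subspace Y" "y \<in> Y"
  shows "\<bar>t\<bar> * infdist v Y \<le> norm (y + t *\<^sub>R v)"
proof (cases "t = 0")
  case False
  have "- ((1 / t) *\<^sub>R y) \<in> Y" using assms by (simp add: subspace_neg subspace_scale)
  then have "infdist v Y \<le> norm (v + (1 / t) *\<^sub>R y)"
    using infdist_le[of "- ((1 / t) *\<^sub>R y)" Y v] by (simp add: dist_norm)
  moreover have "y + t *\<^sub>R v = t *\<^sub>R (v + (1 / t) *\<^sub>R y)" using False by (simp add: algebra_simps)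
  ultimately show ?thesis by (simp add: mult_left_mono)
qed simp

lemma closed_span_insert:
  fixes Y :: "'a::real_normed_vector set"
  assumes Y: "subspace Y" "closed Y"
  shows "closed (span (insert v Y))"
proof (cases "v \<in> Y")
  case True
  then have "span (insert v Y) = Y" using Y(1) by (metis span_eq_iff span_redundant)
  then show ?thesis using Y(2) by simp
next
  case False
  define d where "d = infdist v Y"
  have "d > 0"
    unfolding d_def using infdist_pos_not_in_closed[OF Y(2) _ False] subspace_0[OF Y(1)] by blast
  show ?thesis unfolding span_insert span_eq_iff[THEN iffD2, OF Y(1)] closed_sequential_limits
  proof (intro allI impI, elim conjE)
    fix x l assume "\<forall>n. x n \<in> {x. \<exists>t. x - t *\<^sub>R v \<in> Y}" and lim: "x \<longlonglongrightarrow> l"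
    then obtain t where t: "\<And>n. x n - t n *\<^sub>R v \<in> Y" by simp metis
    have Lip: "\<bar>t m - t n\<bar> * d \<le> dist (x m) (x n)" for m n
      using abs_mult_infdist_le_norm[OF Y(1) subspace_diff[OF Y(1) t[of m] t[of n]], of "t m - t n" v]
      unfolding d_def by (simp add: dist_norm algebra_simps)
    have "Cauchy t"
    proof (rule metric_CauchyI)
      fix e :: real assume "e > 0"
      then obtain M where "\<forall>m\<ge>M. \<forall>n\<ge>M. dist (x m) (x n) < e * d"
        using metric_CauchyD[OF LIMSEQ_imp_Cauchy[OF lim]] \<open>d > 0\<close> by (meson mult_pos_pos)
      then have "\<forall>m\<ge>M. \<forall>n\<ge>M. dist (t m) (t n) < e"
        using Lip \<open>d > 0\<close> by (simp add: dist_real_def) (meson le_less_trans mult_less_cancel_right_pos)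
      then show "\<exists>M. \<forall>m\<ge>M. \<forall>n\<ge>M. dist (t m) (t n) < e" by blast
    qed
    then obtain T where "t \<longlonglongrightarrow> T" using Cauchy_convergent_iff convergent_def by blast
    with lim have "(\<lambda>n. x n - t n *\<^sub>R v) \<longlonglongrightarrow> l - T *\<^sub>R v" by (intro tendsto_intros)
    then have "l - T *\<^sub>R v \<in> Y" by (rule closed_sequentially[OF Y(2) t])
    then show "l \<in> {x. \<exists>t. x - t *\<^sub>R v \<in> Y}" by blast
  qed
qed

lemma span_insert_coefficient_bound:
  fixes Y :: "'a::real_normed_vector set"
  assumes Y: "subspace Y" "closed Y"
  obtains D where "D \<ge> 0" "\<And>x. x \<in> span (insert v Y) \<Longrightarrow> \<exists>t. x - t *\<^sub>R v \<in> Y \<and> \<bar>t\<bar> \<le> D * norm x"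
proof (cases "v \<in> Y")
  case True
  then have "span (insert v Y) = Y" using Y(1) by (metis span_eq_iff span_redundant)
  then show ?thesis by (intro that[of 0]) auto
next
  case False
  define d where "d = infdist v Y"
  have "d > 0"
    unfolding d_def using infdist_pos_not_in_closed[OF Y(2) _ False] subspace_0[OF Y(1)] by blast
  have "\<exists>t. x - t *\<^sub>R v \<in> Y \<and> \<bar>t\<bar> \<le> 1 / d * norm x" if x: "x \<in> span (insert v Y)" for x
  proof -
    obtain t where t: "x - t *\<^sub>R v \<in> Y"
      using x unfolding span_insert span_eq_iff[THEN iffD2, OF Y(1)] by blast
    have "\<bar>t\<bar> * d \<le> norm x"
      using abs_mult_infdist_le_norm[OF Y(1) t, of t v] unfolding d_def by simp
    with t \<open>d > 0\<close> show ?thesis by (auto simp: field_simps)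
  qed
  with \<open>d > 0\<close> show ?thesis by (intro that[of "1 / d"]) auto
qed

lemma coordinates_insert:
  fixes Y Y' :: "'a::real_normed_vector set"
  assumes "finite F" "v \<notin> F" "C \<ge> 0" "D \<ge> 0"
    and C: "\<And>x. \<exists>c. x - (\<Sum>u\<in>F. c u *\<^sub>R u) \<in> Y' \<and> (\<forall>u\<in>F. \<bar>c u\<bar> \<le> C * norm x)"
    and D: "\<And>y. y \<in> Y' \<Longrightarrow> \<exists>t. y - t *\<^sub>R v \<in> Y \<and> \<bar>t\<bar> \<le> D * norm y"
  shows "\<exists>C'\<ge>0. \<forall>x. \<exists>c. x - (\<Sum>u\<in>insert v F. c u *\<^sub>R u) \<in> Y \<and> (\<forall>u\<in>insert v F. \<bar>c u\<bar> \<le> C' * norm x)"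
proof -
  define S where "S = (\<Sum>u\<in>F. norm u)"
  define C' where "C' = max C (D * (1 + C * S))"
  have "\<exists>c. x - (\<Sum>u\<in>insert v F. c u *\<^sub>R u) \<in> Y \<and> (\<forall>u\<in>insert v F. \<bar>c u\<bar> \<le> C' * norm x)" for x
  proof -
    obtain c where c: "x - (\<Sum>u\<in>F. c u *\<^sub>R u) \<in> Y'" "\<forall>u\<in>F. \<bar>c u\<bar> \<le> C * norm x"
      using C by blast
    define y where "y = x - (\<Sum>u\<in>F. c u *\<^sub>R u)"
    obtain t where t: "y - t *\<^sub>R v \<in> Y" "\<bar>t\<bar> \<le> D * norm y" using D c(1) unfolding y_def by blast
    have "norm (\<Sum>u\<in>F. c u *\<^sub>R u) \<le> C * norm x * S"
      unfolding S_def using c(2) by (intro norm_sum_scaleR_le) auto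
    then have "norm y \<le> (1 + C * S) * norm x"
      using norm_triangle_ineq4[of x "\<Sum>u\<in>F. c u *\<^sub>R u"] unfolding y_def by (simp add: algebra_simps)
    then have "D * norm y \<le> D * ((1 + C * S) * norm x)" using \<open>D \<ge> 0\<close> by (rule mult_left_mono)
    then have "\<bar>t\<bar> \<le> D * (1 + C * S) * norm x" using t(2) by (simp add: mult.assoc)
    moreover have "D * (1 + C * S) \<le> C'" "C \<le> C'" unfolding C'_def by simp_all
    ultimately have "\<bar>t\<bar> \<le> C' * norm x" "\<And>u. u \<in> F \<Longrightarrow> \<bar>c u\<bar> \<le> C' * norm x"
      using c(2) by (meson mult_right_mono norm_ge_zero order_trans)+
    moreover have "x - (\<Sum>u\<in>insert v F. (c(v := t)) u *\<^sub>R u) = y - t *\<^sub>R v"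
    proof -
      have "(\<Sum>u\<in>F. (c(v := t)) u *\<^sub>R u) = (\<Sum>u\<in>F. c u *\<^sub>R u)"
        using \<open>v \<notin> F\<close> by (intro sum.cong) auto
      then show ?thesis using assms(1,2) unfolding y_def by (simp add: algebra_simps)
    qed
    ultimately show ?thesis using t(1) by (intro exI[of _ "c(v := t)"]) auto
  qed
  moreover have "C' \<ge> 0" unfolding C'_def using \<open>C \<ge> 0\<close> by simp
  ultimately show ?thesis by auto
qed

lemma finite_codim_coordinates:
  fixes Y :: "'a::real_normed_vector set"
  assumes "finite F" "subspace Y" "closed Y" "span (Y \<union> F) = UNIV"
  shows "\<exists>C\<ge>0. \<forall>x. \<exists>c. x - (\<Sum>u\<in>F. c u *\<^sub>R u) \<in> Y \<and> (\<forall>u\<in>F. \<bar>c u\<bar> \<le> C * norm x)"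
  using assms
proof (induction F arbitrary: Y rule: finite_induct)
  case empty
  then have "Y = UNIV" by (metis span_eq_iff sup_bot.right_neutral)
  then show ?case by auto
next
  case (insert v F)
  define Y' where "Y' = span (insert v Y)"
  have "Y \<union> insert v F \<subseteq> Y' \<union> F" unfolding Y'_def using span_superset by fastforce
  then have "span (Y' \<union> F) = UNIV" using insert.prems(3) span_mono by blast
  with insert.IH[of Y'] closed_span_insert[OF insert.prems(1,2)]
  obtain C where "C \<ge> 0"
    and C: "\<forall>x. \<exists>c. x - (\<Sum>u\<in>F. c u *\<^sub>R u) \<in> Y' \<and> (\<forall>u\<in>F. \<bar>c u\<bar> \<le> C * norm x)"
    unfolding Y'_def by (auto simp only: subspace_span)
  obtain D where "D \<ge> 0" and D: "\<And>y. y \<in> Y' \<Longrightarrow> \<exists>t. y - t *\<^sub>R v \<in> Y \<and> \<bar>t\<bar> \<le> D * norm y"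
    using span_insert_coefficient_bound[OF insert.prems(1,2), of v] unfolding Y'_def by metis
  show ?case
    using coordinates_insert[OF insert.hyps \<open>C \<ge> 0\<close> \<open>D \<ge> 0\<close>, of Y' Y] C D by blast
qed

lemma abs_dist_diff_le_norm_diff:
  fixes x y a b :: "'a::real_normed_vector"
  shows "\<bar>dist x y - dist (x - a) (y - b)\<bar> \<le> norm (a - b)"
  using norm_triangle_ineq3[of "x - y" "(x - a) - (y - b)"] by (simp add: dist_norm algebra_simps)

lemma approx_by_subspace_valued:
  fixes f :: "nat list \<Rightarrow> 'a::real_normed_vector" and coord :: "'a \<Rightarrow> 'a \<Rightarrow> real"
  assumes "finite F"
    and coord_in: "\<And>x. x - (\<Sum>u\<in>F. coord x u *\<^sub>R u) \<in> Y"
    and "C \<ge> 0"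
    and coord_le: "\<And>x u. u \<in> F \<Longrightarrow> \<bar>coord x u\<bar> \<le> C * norm x"
    and bnd: "bounded (f ` incr_tuples UNIV k)" and "\<eta> > 0"
  obtains e G where "strict_mono e" "range G \<subseteq> Y" "bounded (G ` incr_tuples UNIV k)"
    "\<And>n m. n \<in> incr_tuples UNIV k \<Longrightarrow> m \<in> incr_tuples UNIV k \<Longrightarrow>
       \<bar>dist (f (map e n)) (f (map e m)) - dist (G n) (G m)\<bar> \<le> \<eta>"
proof -
  let ?T = "incr_tuples UNIV k"
  obtain B where B: "\<And>a. a \<in> ?T \<Longrightarrow> norm (f a) \<le> B"
    using bnd unfolding bounded_iff by blast
  define S where "S = (\<Sum>u\<in>F. norm u)"
  define w where "w = \<eta> / (S + 1)"
  have "S \<ge> 0" unfolding S_def by (simp add: sum_nonneg)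
  then have "w > 0" "w * S \<le> \<eta>" using \<open>\<eta> > 0\<close> unfolding w_def by (auto simp: field_simps)
  have coord_bound: "\<bar>coord (f a) u\<bar> \<le> C * B" if "a \<in> ?T" "u \<in> F" for a u
    using coord_le[OF that(2), of "f a"] mult_left_mono[OF B[OF that(1)] \<open>C \<ge> 0\<close>] by linarith
  obtain e where e: "strict_mono e" and close:
    "\<And>a b u. a \<in> ?T \<Longrightarrow> b \<in> ?T \<Longrightarrow> u \<in> F \<Longrightarrow>
      \<bar>coord (f (map e a)) u - coord (f (map e b)) u\<bar> < w"
    using subsequence_coordinates_close[OF \<open>finite F\<close> \<open>w > 0\<close>,
        where g = "\<lambda>a u. coord (f a) u" and R = "C * B" and k = k] coord_bound
    by metis
  \<comment> \<open>Along e the F-part h of f is nearly constant, so removing it barely changes distances.\<close>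
  define h where "h x = (\<Sum>u\<in>F. coord x u *\<^sub>R u)" for x
  define G where "G n = f (map e n) - h (f (map e n))" for n
  have "range G \<subseteq> Y" unfolding G_def h_def using coord_in by blast
  have "norm (G n) \<le> B + C * B * S" if "n \<in> ?T" for n
  proof -
    note e_n = map_in_incr_tuples_UNIV[OF e that]
    have "norm (h (f (map e n))) \<le> C * B * S"
      unfolding h_def S_def using coord_bound[OF e_n] by (rule norm_sum_scaleR_le)
    then show ?thesis
      using B[OF e_n] norm_triangle_ineq4[of "f (map e n)" "h (f (map e n))"] unfolding G_def by linarith
  qed
  then have "bounded (G ` ?T)" unfolding bounded_iff by blast
  moreover have "\<bar>dist (f (map e n)) (f (map e m)) - dist (G n) (G m)\<bar> \<le> \<eta>"
    if "n \<in> ?T" "m \<in> ?T" for n m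
  proof -
    define a b where "a = map e n" and "b = map e m"
    have "h (f a) - h (f b) = (\<Sum>u\<in>F. (coord (f a) u - coord (f b) u) *\<^sub>R u)"
      unfolding h_def by (simp add: sum_subtractf scaleR_diff_left)
    also have "norm \<dots> \<le> w * S"
      unfolding S_def a_def b_def using close[OF that] by (intro norm_sum_scaleR_le) (simp add: less_imp_le)
    finally have "norm (h (f a) - h (f b)) \<le> \<eta>" using \<open>w * S \<le> \<eta>\<close> by linarith
    then show ?thesis
      using abs_dist_diff_le_norm_diff[of "f a" "f b" "h (f a)" "h (f b)"] unfolding G_def a_def b_def
      by linarith
  qed
  ultimately show ?thesis using that e \<open>range G \<subseteq> Y\<close> by blast
qed

lemma Lipj_le_Lipj_add:
  fixes f :: "nat list \<Rightarrow> 'a::metric_space" and G :: "nat list \<Rightarrow> 'b::metric_space"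
  assumes "j < k" "strict_mono e" "bounded (f ` incr_tuples UNIV k)"
    and close: "\<And>n m. n \<in> incr_tuples UNIV k \<Longrightarrow> m \<in> incr_tuples UNIV k \<Longrightarrow>
      dist (G n) (G m) \<le> dist (f (map e n)) (f (map e m)) + \<eta>"
  shows "Lipj G k j \<le> Lipj f k j + \<eta>"
proof (rule Lipj_le[OF \<open>j < k\<close>])
  fix a b assume ab: "(a, b) \<in> Hpairs UNIV k j"
  then have "dist (G a) (G b) \<le> dist (f (map e a)) (f (map e b)) + \<eta>"
    using close unfolding Hpairs_def by blast
  also have "dist (f (map e a)) (f (map e b)) \<le> Lipj f k j"
    using dist_le_Lipj[OF assms(3) Hpairs_map[OF assms(2) ab \<open>j < k\<close>]] .
  finally show "dist (G a) (G b) \<le> Lipj f k j + \<eta>" by simp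
qed

lemma lip_pnorm_le_perturbed:
  fixes f :: "nat list \<Rightarrow> 'a::metric_space" and G :: "nat list \<Rightarrow> 'b::metric_space"
  assumes "p > 0" "strict_mono e"
    and "bounded (f ` incr_tuples UNIV k)" "bounded (G ` incr_tuples UNIV k)"
    and close: "\<And>n m. n \<in> incr_tuples UNIV k \<Longrightarrow> m \<in> incr_tuples UNIV k \<Longrightarrow>
      dist (G n) (G m) \<le> dist (f (map e n)) (f (map e m)) + \<eta>"
  shows "lip_pnorm G k p \<le> (\<Sum>j<k. (Lipj f k j + \<eta>) powr p) powr (1 / p)"
  unfolding lip_pnorm_def
proof (rule lp_norm_mono[OF \<open>p > 0\<close>])
  fix j assume "j < k"
  show "0 \<le> Lipj G k j" by (rule Lipj_nonneg[OF assms(4) \<open>j < k\<close>])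
  show "Lipj G k j \<le> Lipj f k j + \<eta>" using Lipj_le_Lipj_add[OF \<open>j < k\<close> assms(2,3) close] .
qed

lemma pair_bound_pullback:
  fixes f :: "nat list \<Rightarrow> 'a::metric_space" and G :: "nat list \<Rightarrow> 'b::metric_space"
  assumes P_sub: "\<And>M. P M k \<subseteq> incr_tuples M k \<times> incr_tuples M k"
    and P_image: "\<And>M. P (e ` M) k \<subseteq> map_prod (map e) (map e) ` P M k"
    and close: "\<And>n m. n \<in> incr_tuples UNIV k \<Longrightarrow> m \<in> incr_tuples UNIV k \<Longrightarrow>
      dist (f (map e n)) (f (map e m)) \<le> dist (G n) (G m) + \<eta>"
    and G_bound: "\<forall>(n, m) \<in> P M k. dist (G n) (G m) \<le> c" and "c + \<eta> \<le> d"
  shows "\<forall>(n, m) \<in> P (e ` M) k. dist (f n) (f m) \<le> d"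
proof clarify
  fix n m assume "(n, m) \<in> P (e ` M) k"
  then obtain n' m' where eq: "n = map e n'" "m = map e m'" and nm': "(n', m') \<in> P M k"
    using P_image by blast
  then have "n' \<in> incr_tuples UNIV k" "m' \<in> incr_tuples UNIV k"
    using P_sub incr_tuples_mono[of M UNIV k] by blast+
  then have "dist (f n) (f m) \<le> dist (G n') (G m') + \<eta>" unfolding eq by (rule close)
  moreover have "dist (G n') (G m') \<le> c" using G_bound nm' by blast
  ultimately show "dist (f n) (f m) \<le> d" using \<open>c + \<eta> \<le> d\<close> by linarith
qed

lemma approx_by_subspace_valued_with_margin:
  fixes f :: "nat list \<Rightarrow> 'a::real_normed_vector" and coord :: "'a \<Rightarrow> 'a \<Rightarrow> real"
  assumes "finite F"
    and coord_in: "\<And>x. x - (\<Sum>u\<in>F. coord x u *\<^sub>R u) \<in> Y"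
    and "C \<ge> 0"
    and coord_le: "\<And>x u. u \<in> F \<Longrightarrow> \<bar>coord x u\<bar> \<le> C * norm x"
    and bnd: "bounded (f ` incr_tuples UNIV k)"
    and "lam \<ge> 0" "p > 0" "\<epsilon> > 0" "lip_pnorm f k p > 0"
  obtains e G \<eta> where "strict_mono e" "range G \<subseteq> Y" "bounded (G ` incr_tuples UNIV k)"
    "\<And>n m. n \<in> incr_tuples UNIV k \<Longrightarrow> m \<in> incr_tuples UNIV k \<Longrightarrow>
       dist (f (map e n)) (f (map e m)) \<le> dist (G n) (G m) + \<eta>"
    "lam * lip_pnorm G k p + \<eta> \<le> (lam + \<epsilon>) * lip_pnorm f k p"
proof -
  have L: "(\<Sum>j<k. Lipj f k j powr p) powr (1 / p) > 0"
    using \<open>lip_pnorm f k p > 0\<close> unfolding lip_pnorm_def .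
  obtain \<eta> where "\<eta> > 0" and margin: "lam * (\<Sum>j<k. (Lipj f k j + \<eta>) powr p) powr (1 / p) + \<eta>
      \<le> (lam + \<epsilon>) * (\<Sum>j<k. Lipj f k j powr p) powr (1 / p)"
    by (rule lp_norm_perturbation_margin[OF \<open>p > 0\<close> \<open>\<epsilon> > 0\<close> Lipj_nonneg[OF bnd] L])
  obtain e G where e: "strict_mono e" and G: "range G \<subseteq> Y" "bounded (G ` incr_tuples UNIV k)"
    and close: "\<And>n m. n \<in> incr_tuples UNIV k \<Longrightarrow> m \<in> incr_tuples UNIV k \<Longrightarrow>
      \<bar>dist (f (map e n)) (f (map e m)) - dist (G n) (G m)\<bar> \<le> \<eta>"
    using approx_by_subspace_valued[OF \<open>finite F\<close> coord_in \<open>C \<ge> 0\<close> coord_le bnd \<open>\<eta> > 0\<close>] by metis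
  have close_le: "dist (G n) (G m) \<le> dist (f (map e n)) (f (map e m)) + \<eta>"
      "dist (f (map e n)) (f (map e m)) \<le> dist (G n) (G m) + \<eta>"
    if "n \<in> incr_tuples UNIV k" "m \<in> incr_tuples UNIV k" for n m
    using close[OF that] by (simp_all add: abs_le_iff)
  have "lip_pnorm G k p \<le> (\<Sum>j<k. (Lipj f k j + \<eta>) powr p) powr (1 / p)"
    by (rule lip_pnorm_le_perturbed[OF \<open>p > 0\<close> e bnd G(2) close_le(1)])
  then have "lam * lip_pnorm G k p \<le> lam * (\<Sum>j<k. (Lipj f k j + \<eta>) powr p) powr (1 / p)"
    using \<open>lam \<ge> 0\<close> by (rule mult_left_mono)
  with margin have "lam * lip_pnorm G k p + \<eta> \<le> (lam + \<epsilon>) * lip_pnorm f k p"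
    unfolding lip_pnorm_def by linarith
  with that[OF e G close_le(2)] show ?thesis by blast
qed

lemma tuple_concentration_finite_codim:
  fixes Y :: "'a::real_normed_vector set" and coord :: "'a \<Rightarrow> 'a \<Rightarrow> real"
  assumes P_sub: "\<And>M k. P M k \<subseteq> incr_tuples M k \<times> incr_tuples M k"
    and P_image: "\<And>e M k. strict_mono e \<Longrightarrow> P (e ` M) k \<subseteq> map_prod (map e) (map e) ` P M k"
    and "finite F"
    and coord_in: "\<And>x. x - (\<Sum>u\<in>F. coord x u *\<^sub>R u) \<in> Y"
    and "C \<ge> 0"
    and coord_le: "\<And>x u. u \<in> F \<Longrightarrow> \<bar>coord x u\<bar> \<le> C * norm x"
    and "lam \<ge> 0" "p > 0" "\<epsilon> > 0"
    and conc: "tuple_concentration P lam p Y"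
  shows "tuple_concentration P (lam + \<epsilon>) p (UNIV :: 'a set)"
  unfolding tuple_concentration_def
proof (intro allI impI)
  fix k and f :: "nat list \<Rightarrow> 'a"
  assume "f ` incr_tuples UNIV k \<subseteq> UNIV \<and> bounded (f ` incr_tuples UNIV k)"
  then have bnd: "bounded (f ` incr_tuples UNIV k)" ..
  show "\<exists>M. infinite M \<and> (\<forall>(n, m) \<in> P M k. dist (f n) (f m) \<le> (lam + \<epsilon>) * lip_pnorm f k p)"
  proof (cases "lip_pnorm f k p = 0")
    case True
    then have "\<forall>(n, m) \<in> P UNIV k. dist (f n) (f m) \<le> (lam + \<epsilon>) * lip_pnorm f k p"
      using P_sub lip_pnorm_eq_0_imp_eq[OF bnd \<open>p > 0\<close>] by fastforce
    then show ?thesis by blast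
  next
    case False
    then have "lip_pnorm f k p > 0" using lip_pnorm_nonneg[of f k p] by linarith
    then obtain e G \<eta> where e: "strict_mono e" and G: "range G \<subseteq> Y" "bounded (G ` incr_tuples UNIV k)"
      and close: "\<And>n m. n \<in> incr_tuples UNIV k \<Longrightarrow> m \<in> incr_tuples UNIV k \<Longrightarrow>
        dist (f (map e n)) (f (map e m)) \<le> dist (G n) (G m) + \<eta>"
      and bound: "lam * lip_pnorm G k p + \<eta> \<le> (lam + \<epsilon>) * lip_pnorm f k p"
      using approx_by_subspace_valued_with_margin[OF \<open>finite F\<close> coord_in \<open>C \<ge> 0\<close> coord_le bnd
          \<open>lam \<ge> 0\<close> \<open>p > 0\<close> \<open>\<epsilon> > 0\<close>] by metis
    from G obtain M where "infinite M"
      and GM: "\<forall>(n, m) \<in> P M k. dist (G n) (G m) \<le> lam * lip_pnorm G k p"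
      using conc[unfolded tuple_concentration_def, rule_format, where k = k and f = G] by blast
    have "infinite (e ` M)"
      using \<open>infinite M\<close> finite_imageD[OF _ inj_on_subset[OF strict_mono_imp_inj_on[OF e] subset_UNIV]]
      by blast
    moreover have "\<forall>(n, m) \<in> P (e ` M) k. dist (f n) (f m) \<le> (lam + \<epsilon>) * lip_pnorm f k p"
      using pair_bound_pullback[where f = f and G = G and P = P and k = k and e = e,
          OF P_sub P_image[OF e] close GM bound] .
    ultimately show ?thesis by blast
  qed
qed

theorem lemma4p1:
  fixes Y :: "'a::banach set" and lam p :: real
  assumes "lam > 0" and "p > 1"
    and "subspace Y" and "closed Y"
    and "\<exists>F. finite F \<and> span (Y \<union> F) = UNIV"
  shows "(HFC lam p Y \<longrightarrow> (\<forall>\<epsilon>>0. HFC (lam + \<epsilon>) p (UNIV :: 'a set))) \<and>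
         (HIC lam p Y \<longrightarrow> (\<forall>\<epsilon>>0. HIC (lam + \<epsilon>) p (UNIV :: 'a set)))"
proof -
  obtain F where F: "finite F" "span (Y \<union> F) = UNIV" using assms(5) by blast
  then obtain C where "C \<ge> 0"
    and "\<forall>x. \<exists>c. x - (\<Sum>u\<in>F. c u *\<^sub>R u) \<in> Y \<and> (\<forall>u\<in>F. \<bar>c u\<bar> \<le> C * norm x)"
    using finite_codim_coordinates[OF F(1) assms(3,4) F(2)] by blast
  then obtain coord where coord: "\<And>x. x - (\<Sum>u\<in>F. coord x u *\<^sub>R u) \<in> Y"
    "\<And>x u. u \<in> F \<Longrightarrow> \<bar>coord x u\<bar> \<le> C * norm x"
    by metis
  note transfer = tuple_concentration_finite_codim[where F = F and coord = coord and C = C]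
  have "tuple_concentration (\<lambda>M k. incr_tuples M k \<times> incr_tuples M k) (lam + \<epsilon>) p (UNIV :: 'a set)"
    if "tuple_concentration (\<lambda>M k. incr_tuples M k \<times> incr_tuples M k) lam p Y" "\<epsilon> > 0" for \<epsilon>
    by (rule transfer)
      (use F(1) \<open>C \<ge> 0\<close> coord assms(1,2) that in \<open>auto simp: incr_tuples_image map_prod_image\<close>)
  moreover have "tuple_concentration interlaced (lam + \<epsilon>) p (UNIV :: 'a set)"
    if "tuple_concentration interlaced lam p Y" "\<epsilon> > 0" for \<epsilon>
    by (rule transfer)
      (use F(1) \<open>C \<ge> 0\<close> coord assms(1,2) that interlaced_image in \<open>auto simp: interlaced_def\<close>)
  ultimately show ?thesis
    unfolding HFC_iff_tuple_concentration HIC_iff_tuple_concentration by blast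
qed

end
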